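(* Let $\gamma$ be a partition. Then $\gamma$ is $n$-colorless if and only if there exists $k\in\hat I$ such that $v^{(k)}(\gamma)\in\mathbb Z_{\ge0}^n$. Moreover, if $\gamma$ is $n$-colorless, then $v^{(k)}(\gamma)=(\delta_{i,k})_{i\in\hat I}$ for all $k\in\hat I$.
   Context: Fix $n\ge3$ and let $\hat I=\{0,1,\dots,n-1\}$, with residues mod $n$. For a partition $\gamma$ let $Y(\gamma)=\{(x,y)\in\mathbb Z_{\ge1}^2:\gamma_x\ge y\}$. The partition $\gamma$ is $n$-colorless if, for each residue $i$ mod $n$, the number of boxes $(x,y)\in Y(\gamma)$ with $x-y\equiv i\pmod n$ is the same. Corners: let $\gamma'_y=|\{x:\gamma_x\ge y\}|$ be the conjugate partition. - $(x,y)\in\mathbb Z_{\ge1}^2$ is a convex corner of $\gamma$ if $\gamma'_{y+1}<\gamma'_y=x$. - $(x,y)$ is a concave corner if $\gamma'_y=x-1$ and either $y=1$ or $\gamma'_{y-1}>x-1$. For $k,i\in\hat I$ let $CC_i^{(k)}(\gamma)$ (resp. $CV_i^{(k)}(\gamma)$) be the set of concave (resp. convex) corners $(x,y)$ with $k+x-y\equiv i\pmod n$. Define $v^{(k)}(\gamma)\in\mathbb Z^n$ (coordinates indexed by $\hat I$) by $v^{(k)}(\gamma)_i=|CC_i^{(k)}(\gamma)|-|CV_i^{(k)}(\gamma)|$. *)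

theory Defs
  imports Main
begin

text \<open>A partition is a weakly decreasing list of positive naturals; gamma_x is the x-th
part (1-indexed), and 0 for x beyond the length.\<close>

definition is_partition :: "nat list \<Rightarrow> bool" where
  "is_partition \<gamma> \<longleftrightarrow> sorted (rev \<gamma>) \<and> (\<forall>a \<in> set \<gamma>. 0 < a)"

definition part :: "nat list \<Rightarrow> int \<Rightarrow> int" where
  "part \<gamma> x = (if 1 \<le> x \<and> nat x \<le> length \<gamma> then int (\<gamma> ! (nat x - 1)) else 0)"

definition young :: "nat list \<Rightarrow> (int \<times> int) set" where
  "young \<gamma> = {(x, y). 1 \<le> x \<and> 1 \<le> y \<and> part \<gamma> x \<ge> y}"

definition colorless :: "nat \<Rightarrow> nat list \<Rightarrow> bool" where
  "colorless n \<gamma> \<longleftrightarrow> (\<forall>i j. card {(x, y) \<in> young \<gamma>. (x - y) mod int n = i mod int n}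
                            = card {(x, y) \<in> young \<gamma>. (x - y) mod int n = j mod int n})"

definition conj_part :: "nat list \<Rightarrow> int \<Rightarrow> int" where
  "conj_part \<gamma> y = int (card {x::int. 1 \<le> x \<and> part \<gamma> x \<ge> y})"

definition convex_corner :: "nat list \<Rightarrow> int \<Rightarrow> int \<Rightarrow> bool" where
  "convex_corner \<gamma> x y \<longleftrightarrow> 1 \<le> x \<and> 1 \<le> y \<and>
     conj_part \<gamma> (y + 1) < conj_part \<gamma> y \<and> conj_part \<gamma> y = x"

definition concave_corner :: "nat list \<Rightarrow> int \<Rightarrow> int \<Rightarrow> bool" where
  "concave_corner \<gamma> x y \<longleftrightarrow> 1 \<le> x \<and> 1 \<le> y \<and>
     conj_part \<gamma> y = x - 1 \<and> (y = 1 \<or> conj_part \<gamma> (y - 1) > x - 1)"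

definition CC :: "nat \<Rightarrow> nat list \<Rightarrow> int \<Rightarrow> int \<Rightarrow> (int \<times> int) set" where
  "CC n \<gamma> k i = {(x, y). concave_corner \<gamma> x y \<and> (k + x - y) mod int n = i mod int n}"

definition CV :: "nat \<Rightarrow> nat list \<Rightarrow> int \<Rightarrow> int \<Rightarrow> (int \<times> int) set" where
  "CV n \<gamma> k i = {(x, y). convex_corner \<gamma> x y \<and> (k + x - y) mod int n = i mod int n}"

definition vvec :: "nat \<Rightarrow> nat list \<Rightarrow> int \<Rightarrow> int \<Rightarrow> int" where
  "vvec n \<gamma> k i = int (card (CC n \<gamma> k i)) - int (card (CV n \<gamma> k i))"

end

theory Submission
  imports Defs
begin

text \<open>Let N r count the boxes whose content x - y is congruent to r mod n. For any weight w
on contents, the sum of w over the concave corners minus the sum over the convex corners equals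
w 0 plus the sum, over all boxes of content c, of the second difference w (c - 1) + w (c + 1) - 2 w c;
column by column both sides telescope. Taking for w the indicator of a residue class gives
v(k)_i = [i = k] + N (i - k + 1) + N (i - k - 1) - 2 N (i - k), which is [i = k] when the partition
is colorless. Conversely, if these numbers are nonnegative, the differences D r = N (r + 1) - N r
increase along r = 0, ..., n - 1 and rise by at most one when going around the cycle; since they
sum to zero over a period, they all vanish, so N is constant.\<close>

lemma part_eq_0: "x < 1 \<or> int (length \<gamma>) < x \<Longrightarrow> part \<gamma> x = 0"
  unfolding part_def by auto

lemma part_nonneg: "0 \<le> part \<gamma> x"
  unfolding part_def by auto

lemma part_antimono:
  assumes "is_partition \<gamma>" "1 \<le> x" "x \<le> x'"
  shows "part \<gamma> x' \<le> part \<gamma> x"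
proof (cases "x' \<le> int (length \<gamma>)")
  case True
  have "sorted (rev \<gamma>)" using assms(1) unfolding is_partition_def by auto
  then have "\<gamma> ! (nat x' - 1) \<le> \<gamma> ! (nat x - 1)"
    by (rule sorted_rev_nth_mono) (use assms True in auto)
  then show ?thesis using assms True unfolding part_def by auto
next
  case False
  then show ?thesis using part_eq_0[of x' \<gamma>] part_nonneg[of \<gamma> x] by auto
qed

lemma down_closed_eq_atLeastAtMost_card:
  fixes S :: "int set"
  assumes "finite S" "\<And>x. x \<in> S \<Longrightarrow> 1 \<le> x"
    "\<And>x x'. x \<in> S \<Longrightarrow> 1 \<le> x' \<Longrightarrow> x' \<le> x \<Longrightarrow> x' \<in> S"
  shows "S = {1..int (card S)}"
proof (cases "S = {}")
  case False
  define M where "M = Max S"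
  have max: "M \<in> S" using False assms(1) unfolding M_def by simp
  have "S = {1..M}"
  proof
    show "S \<subseteq> {1..M}" using assms(1,2) unfolding M_def by auto
    show "{1..M} \<subseteq> S" using assms(3)[OF max] by auto
  qed
  then show ?thesis using assms(2)[OF max] by simp
qed simp

lemma le_part_iff_le_conj_part:
  assumes "is_partition \<gamma>" "1 \<le> y" "1 \<le> x"
  shows "y \<le> part \<gamma> x \<longleftrightarrow> x \<le> conj_part \<gamma> y"
proof -
  define S where "S = {x. 1 \<le> x \<and> y \<le> part \<gamma> x}"
  have "S \<subseteq> {1..int (length \<gamma>)}"
  proof
    fix z assume "z \<in> S"
    then show "z \<in> {1..int (length \<gamma>)}" using part_eq_0[of z \<gamma>] assms(2) unfolding S_def by force
  qed
  then have "finite S" by (rule finite_subset) simp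
  then have "S = {1..int (card S)}"
    by (rule down_closed_eq_atLeastAtMost_card)
       (use part_antimono[OF assms(1)] in \<open>fastforce simp: S_def\<close>)+
  moreover have "conj_part \<gamma> y = int (card S)" unfolding conj_part_def S_def by simp
  ultimately show ?thesis using assms(3) unfolding S_def by (metis atLeastAtMost_iff mem_Collect_eq)
qed

lemma concave_corner_iff_part:
  assumes "is_partition \<gamma>"
  shows "concave_corner \<gamma> x y \<longleftrightarrow>
    1 \<le> x \<and> 1 \<le> y \<and> part \<gamma> x = y - 1 \<and> (x = 1 \<or> y \<le> part \<gamma> (x - 1))"
proof (cases "1 \<le> x \<and> 1 \<le> y")
  case True
  then have x: "1 \<le> x" and y: "1 \<le> y" by auto
  have "x - 1 \<le> conj_part \<gamma> y \<longleftrightarrow> x = 1 \<or> y \<le> part \<gamma> (x - 1)"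
    using le_part_iff_le_conj_part[OF assms y, of "x - 1"] x
    by (cases "x = 1") (auto simp: conj_part_def)
  moreover have "y \<noteq> 1 \<Longrightarrow> x - 1 < conj_part \<gamma> (y - 1) \<longleftrightarrow> y - 1 \<le> part \<gamma> x"
    using le_part_iff_le_conj_part[OF assms _ x, of "y - 1"] y by auto
  ultimately show ?thesis
    unfolding concave_corner_def
    using le_part_iff_le_conj_part[OF assms y x] x y part_nonneg[of \<gamma> x] by (cases "y = 1") auto
qed (auto simp: concave_corner_def)

lemma convex_corner_iff_part:
  assumes "is_partition \<gamma>"
  shows "convex_corner \<gamma> x y \<longleftrightarrow> 1 \<le> x \<and> 1 \<le> y \<and> part \<gamma> x = y \<and> part \<gamma> (x + 1) < y"
proof (cases "1 \<le> x \<and> 1 \<le> y")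
  case True
  then have x: "1 \<le> x" and y: "1 \<le> y" by auto
  have "y \<le> part \<gamma> x \<longleftrightarrow> x \<le> conj_part \<gamma> y"
    "y \<le> part \<gamma> (x + 1) \<longleftrightarrow> x + 1 \<le> conj_part \<gamma> y"
    "y + 1 \<le> part \<gamma> x \<longleftrightarrow> x \<le> conj_part \<gamma> (y + 1)"
    using le_part_iff_le_conj_part[OF assms] x y by simp_all
  then show ?thesis unfolding convex_corner_def using x y by auto
qed (auto simp: convex_corner_def)

definition part0 :: "nat list \<Rightarrow> nat \<Rightarrow> int" where
  "part0 \<gamma> j = part \<gamma> (int j + 1)"

lemma part0_antimono: "is_partition \<gamma> \<Longrightarrow> part0 \<gamma> (Suc j) \<le> part0 \<gamma> j"
  unfolding part0_def using part_antimono[of \<gamma> "int j + 1" "int j + 2"] by (simp add: add.commute)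

lemma part0_nonneg: "0 \<le> part0 \<gamma> j"
  unfolding part0_def by (rule part_nonneg)

lemma part0_eq_0: "length \<gamma> \<le> j \<Longrightarrow> part0 \<gamma> j = 0"
  unfolding part0_def by (simp add: part_eq_0)

lemma concave_corners_eq_image:
  assumes "is_partition \<gamma>"
  shows "{(x, y). concave_corner \<gamma> x y} = (\<lambda>j. (int j + 1, part0 \<gamma> j + 1)) `
    {j \<in> {..length \<gamma>}. j = 0 \<or> part0 \<gamma> j < part0 \<gamma> (j - 1)}"
proof (intro set_eqI iffI)
  fix p assume "p \<in> {(x, y). concave_corner \<gamma> x y}"
  then obtain x y where p: "p = (x, y)" and x: "1 \<le> x" and y: "part \<gamma> x = y - 1"
    and step: "x = 1 \<or> y \<le> part \<gamma> (x - 1)"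
    using concave_corner_iff_part[OF assms] by auto
  define j where "j = nat (x - 1)"
  have xj: "x = int j + 1" using x j_def by auto
  have "j \<le> length \<gamma>"
    using step part_eq_0[of "x - 1" \<gamma>] y part_nonneg[of \<gamma> x] xj by fastforce
  moreover have "j = 0 \<or> part0 \<gamma> j < part0 \<gamma> (j - 1)"
    using step y xj by (cases j) (auto simp: part0_def add.commute)
  moreover have "p = (int j + 1, part0 \<gamma> j + 1)" using p xj y unfolding part0_def by auto
  ultimately show "p \<in> (\<lambda>j. (int j + 1, part0 \<gamma> j + 1)) `
    {j \<in> {..length \<gamma>}. j = 0 \<or> part0 \<gamma> j < part0 \<gamma> (j - 1)}" by auto
next
  fix p assume "p \<in> (\<lambda>j. (int j + 1, part0 \<gamma> j + 1)) `
    {j \<in> {..length \<gamma>}. j = 0 \<or> part0 \<gamma> j < part0 \<gamma> (j - 1)}"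
  then obtain j where p: "p = (int j + 1, part0 \<gamma> j + 1)"
    and j: "j = 0 \<or> part0 \<gamma> j < part0 \<gamma> (j - 1)" by auto
  have "j = 0 \<or> part0 \<gamma> j + 1 \<le> part \<gamma> (int j)"
    using j by (cases j) (auto simp: part0_def add.commute)
  then show "p \<in> {(x, y). concave_corner \<gamma> x y}"
    using p concave_corner_iff_part[OF assms] part0_nonneg[of \<gamma> j] unfolding part0_def by auto
qed

lemma convex_corners_eq_image:
  assumes "is_partition \<gamma>"
  shows "{(x, y). convex_corner \<gamma> x y} = (\<lambda>j. (int j + 1, part0 \<gamma> j)) `
    {j \<in> {..length \<gamma>}. part0 \<gamma> (Suc j) < part0 \<gamma> j}"
proof (intro set_eqI iffI)
  fix p assume "p \<in> {(x, y). convex_corner \<gamma> x y}"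
  then obtain x y where p: "p = (x, y)" and c: "1 \<le> x" "1 \<le> y" "part \<gamma> x = y" "part \<gamma> (x + 1) < y"
    using convex_corner_iff_part[OF assms] by auto
  define j where "j = nat (x - 1)"
  have xj: "x = int j + 1" using c j_def by auto
  have "j \<le> length \<gamma>" using c part_eq_0[of x \<gamma>] xj by force
  moreover have "part0 \<gamma> (Suc j) < part0 \<gamma> j" using c xj unfolding part0_def by (simp add: add.commute)
  moreover have "p = (int j + 1, part0 \<gamma> j)" using p xj c unfolding part0_def by auto
  ultimately show "p \<in> (\<lambda>j. (int j + 1, part0 \<gamma> j)) `
    {j \<in> {..length \<gamma>}. part0 \<gamma> (Suc j) < part0 \<gamma> j}" by auto
next
  fix p assume "p \<in> (\<lambda>j. (int j + 1, part0 \<gamma> j)) `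
    {j \<in> {..length \<gamma>}. part0 \<gamma> (Suc j) < part0 \<gamma> j}"
  then obtain j where p: "p = (int j + 1, part0 \<gamma> j)" and j: "part0 \<gamma> (Suc j) < part0 \<gamma> j" by auto
  have "1 \<le> part0 \<gamma> j" using j part0_nonneg[of \<gamma> "Suc j"] by auto
  then show "p \<in> {(x, y). convex_corner \<gamma> x y}"
    using p j convex_corner_iff_part[OF assms] unfolding part0_def by (auto simp: add.commute)
qed

lemma young_eq_image:
  "young \<gamma> = (\<lambda>(j, t). (int j + 1, int t + 1)) ` (SIGMA j:{..<length \<gamma>}. {..<nat (part0 \<gamma> j)})"
proof (intro set_eqI iffI)
  fix p assume "p \<in> young \<gamma>"
  then obtain x y where p: "p = (x, y)" and c: "1 \<le> x" "1 \<le> y" "y \<le> part \<gamma> x"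
    unfolding young_def by auto
  have "x \<le> int (length \<gamma>)" using c part_eq_0[of x \<gamma>] by force
  then have "(nat (x - 1), nat (y - 1)) \<in> (SIGMA j:{..<length \<gamma>}. {..<nat (part0 \<gamma> j)})"
    using c unfolding part0_def by auto
  then show "p \<in> (\<lambda>(j, t). (int j + 1, int t + 1)) ` (SIGMA j:{..<length \<gamma>}. {..<nat (part0 \<gamma> j)})"
    by (rule rev_image_eqI) (use p c in auto)
qed (auto simp: young_def part0_def)

lemma finite_young: "finite (young \<gamma>)"
  unfolding young_eq_image by auto

lemma sum_inj_image_filter:
  assumes "inj f" "finite A"
  shows "(\<Sum>p\<in>f ` {j \<in> A. Q j}. g p) = (\<Sum>j\<in>A. if Q j then g (f j) else 0)"
  using assms by (simp add: sum.reindex inj_on_subset sum.inter_filter)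

lemma finite_concave_corners: "is_partition \<gamma> \<Longrightarrow> finite {(x, y). concave_corner \<gamma> x y}"
  by (simp add: concave_corners_eq_image)

lemma finite_convex_corners: "is_partition \<gamma> \<Longrightarrow> finite {(x, y). convex_corner \<gamma> x y}"
  by (simp add: convex_corners_eq_image)

lemma sum_young_content:
  "(\<Sum>p\<in>young \<gamma>. h (fst p - snd p)) = (\<Sum>j<length \<gamma>. \<Sum>t<nat (part0 \<gamma> j). h (int j - int t))"
proof -
  have inj: "inj_on (\<lambda>(j, t). (int j + 1, int t + 1)) A" for A :: "(nat \<times> nat) set"
    by (auto simp: inj_on_def)
  have "(\<Sum>p\<in>young \<gamma>. h (fst p - snd p)) =
      (\<Sum>(j, t)\<in>(SIGMA j:{..<length \<gamma>}. {..<nat (part0 \<gamma> j)}). h (int j - int t))"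
    unfolding young_eq_image by (subst sum.reindex[OF inj]) (simp add: split_def)
  also have "\<dots> = (\<Sum>j<length \<gamma>. \<Sum>t<nat (part0 \<gamma> j). h (int j - int t))"
    by (rule sum.Sigma[of _ _ "\<lambda>j t. h (int j - int t)", symmetric]) simp_all
  finally show ?thesis .
qed

lemma staircase_corner_sum:
  fixes P :: "nat \<Rightarrow> int" and w :: "int \<Rightarrow> int"
  assumes "\<And>j. P (Suc j) \<le> P j"
  shows "(\<Sum>j\<le>M. if j = 0 \<or> P j < P (j - 1) then w (int j - P j) else 0)
       - (\<Sum>j\<le>M. if P (Suc j) < P j then w (int j + 1 - P j) else 0)
       = (\<Sum>j\<le>M. w (int j - P j) - w (int j + 1 - P j))
         + (if P (Suc M) = P M then w (int M + 1 - P M) else 0)"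
proof (induction M)
  case 0
  then show ?case using assms[of 0] by auto
next
  case (Suc M)
  moreover have "P (Suc (Suc M)) < P (Suc M) \<or> P (Suc (Suc M)) = P (Suc M)"
    "P (Suc M) < P M \<or> P (Suc M) = P M"
    using assms[of M] assms[of "Suc M"] by auto
  ultimately show ?case
    by (elim disjE) (simp_all add: algebra_simps)
qed

lemma column_second_difference_sum:
  fixes w :: "int \<Rightarrow> int"
  assumes "0 \<le> p"
  shows "(\<Sum>t<nat p. w (c - int t - 1) + w (c - int t + 1) - 2 * w (c - int t))
       = (w (c + 1) - w c) - (w (c + 1 - p) - w (c - p))"
proof -
  define f where "f t = w (c - int t + 1) - w (c - int t)" for t
  have "(\<Sum>t<nat p. w (c - int t - 1) + w (c - int t + 1) - 2 * w (c - int t))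
       = (\<Sum>t<nat p. f t - f (Suc t))"
    unfolding f_def by (intro sum.cong) (auto simp: algebra_simps)
  also have "\<dots> = f 0 - f (nat p)" by (rule sum_lessThan_telescope')
  finally show ?thesis unfolding f_def using assms by (simp add: algebra_simps)
qed

lemma corner_sum_eq_second_difference_sum:
  fixes w :: "int \<Rightarrow> int"
  assumes "is_partition \<gamma>"
  shows "(\<Sum>p\<in>{(x, y). concave_corner \<gamma> x y}. w (fst p - snd p))
       - (\<Sum>p\<in>{(x, y). convex_corner \<gamma> x y}. w (fst p - snd p))
       = w 0 + (\<Sum>p\<in>young \<gamma>. w (fst p - snd p - 1) + w (fst p - snd p + 1) - 2 * w (fst p - snd p))"
proof -
  define N where "N = length \<gamma>"
  define P where "P = part0 \<gamma>"
  define D where "D = (\<Sum>j<N. w (int j - P j) - w (int j + 1 - P j))"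
  have "inj (\<lambda>j. (int j + 1, P j + 1))" "inj (\<lambda>j. (int j + 1, P j))"
    by (auto simp: inj_on_def)
  then have "(\<Sum>p\<in>{(x, y). concave_corner \<gamma> x y}. w (fst p - snd p))
       - (\<Sum>p\<in>{(x, y). convex_corner \<gamma> x y}. w (fst p - snd p))
     = (\<Sum>j\<le>N. if j = 0 \<or> P j < P (j - 1) then w (int j - P j) else 0)
       - (\<Sum>j\<le>N. if P (Suc j) < P j then w (int j + 1 - P j) else 0)"
    unfolding concave_corners_eq_image[OF assms] convex_corners_eq_image[OF assms]
      N_def[symmetric] P_def[symmetric]
    by (simp only: sum_inj_image_filter finite_atMost) (simp cong: if_cong)
  also have "\<dots> = (\<Sum>j\<le>N. w (int j - P j) - w (int j + 1 - P j)) + w (int N + 1)"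
    using staircase_corner_sum[of P w N] part0_antimono[OF assms] part0_eq_0[of \<gamma>]
    unfolding P_def N_def by simp
  also have "\<dots> = D + w (int N)"
    using part0_eq_0[of \<gamma> N] unfolding D_def P_def N_def by (simp add: lessThan_Suc_atMost[symmetric])
  finally have corners: "(\<Sum>p\<in>{(x, y). concave_corner \<gamma> x y}. w (fst p - snd p))
       - (\<Sum>p\<in>{(x, y). convex_corner \<gamma> x y}. w (fst p - snd p)) = D + w (int N)" .
  have "(\<Sum>p\<in>young \<gamma>. w (fst p - snd p - 1) + w (fst p - snd p + 1) - 2 * w (fst p - snd p))
      = (\<Sum>j<N. (w (int j + 1) - w (int j)) - (w (int j + 1 - P j) - w (int j - P j)))"
    unfolding sum_young_content[where h = "\<lambda>c. w (c - 1) + w (c + 1) - 2 * w c"] N_def P_def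
    by (intro sum.cong refl column_second_difference_sum part0_nonneg)
  also have "\<dots> = (\<Sum>j<N. w (int (Suc j)) - w (int j)) + D"
    unfolding D_def by (simp add: sum.distrib[symmetric] algebra_simps)
  also have "\<dots> = w (int N) - w 0 + D"
    using sum_lessThan_telescope[of "\<lambda>j. w (int j)" N] by simp
  finally show ?thesis using corners by simp
qed

definition residue_count :: "nat \<Rightarrow> nat list \<Rightarrow> int \<Rightarrow> int" where
  "residue_count n \<gamma> r = int (card {(x, y) \<in> young \<gamma>. (x - y) mod int n = r mod int n})"

lemma card_filter_eq_sum:
  "finite A \<Longrightarrow> int (card {p \<in> A. Q p}) = (\<Sum>p\<in>A. if Q p then 1 else 0)"
  by (simp add: sum.inter_filter[symmetric])

lemma vvec_eq_second_difference:
  assumes "is_partition \<gamma>"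
  shows "vvec n \<gamma> k i = (if (i - k) mod int n = 0 then 1 else 0)
    + residue_count n \<gamma> (i - k + 1) + residue_count n \<gamma> (i - k - 1) - 2 * residue_count n \<gamma> (i - k)"
proof -
  define w where "w c = (if (k + c) mod int n = i mod int n then 1 else 0 :: int)" for c
  have corners: "int (card {p \<in> A. (k + (fst p - snd p)) mod int n = i mod int n})
      = (\<Sum>p\<in>A. w (fst p - snd p))" if "finite A" for A
    unfolding w_def by (rule card_filter_eq_sum[OF that])
  have boxes: "(\<Sum>p\<in>young \<gamma>. w (fst p - snd p + d)) = residue_count n \<gamma> (i - k - d)" for d
  proof -
    have "(k + (c + d)) mod int n = i mod int n \<longleftrightarrow> c mod int n = (i - k - d) mod int n" for c
      by (simp add: mod_eq_dvd_iff algebra_simps)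
    then show ?thesis
      unfolding w_def residue_count_def card_filter_eq_sum[OF finite_young, symmetric]
      by (simp add: split_def)
  qed
  have "CC n \<gamma> k i = {p \<in> {(x, y). concave_corner \<gamma> x y}. (k + (fst p - snd p)) mod int n = i mod int n}"
    "CV n \<gamma> k i = {p \<in> {(x, y). convex_corner \<gamma> x y}. (k + (fst p - snd p)) mod int n = i mod int n}"
    unfolding CC_def CV_def by (auto simp: add_diff_eq)
  then have "vvec n \<gamma> k i = (\<Sum>p\<in>{(x, y). concave_corner \<gamma> x y}. w (fst p - snd p))
      - (\<Sum>p\<in>{(x, y). convex_corner \<gamma> x y}. w (fst p - snd p))"
    unfolding vvec_def
    by (simp only: corners finite_concave_corners[OF assms] finite_convex_corners[OF assms])
  also have "\<dots> = w 0 + (\<Sum>p\<in>young \<gamma>.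
      w (fst p - snd p - 1) + w (fst p - snd p + 1) - 2 * w (fst p - snd p))"
    by (rule corner_sum_eq_second_difference_sum[OF assms])
  also have "\<dots> = w 0 + (\<Sum>p\<in>young \<gamma>. w (fst p - snd p + (-1))) + (\<Sum>p\<in>young \<gamma>. w (fst p - snd p + 1))
      - 2 * (\<Sum>p\<in>young \<gamma>. w (fst p - snd p + 0))"
    by (simp add: sum.distrib sum_subtractf sum_distrib_left)
  also have "\<dots> = (if (i - k) mod int n = 0 then 1 else 0)
      + residue_count n \<gamma> (i - k + 1) + residue_count n \<gamma> (i - k - 1) - 2 * residue_count n \<gamma> (i - k)"
    unfolding boxes by (simp add: w_def mod_eq_dvd_iff dvd_diff_commute mod_eq_0_iff_dvd)
  finally show ?thesis .
qed

lemma eq_0_if_mono_sum_eq_0_spread_le_1: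
  fixes d :: "nat \<Rightarrow> int"
  assumes mono: "\<And>j. Suc j < n \<Longrightarrow> d j \<le> d (Suc j)"
    and spread: "d (n - 1) \<le> d 0 + 1"
    and sum: "(\<Sum>j<n. d j) = 0"
    and "j < n"
  shows "d j = 0"
proof -
  obtain m where n: "n = Suc m" using \<open>j < n\<close> by (cases n) auto
  define e where "e j = d j - d 0" for j
  have d_le: "d i \<le> d j" if "i \<le> j" "j < n" for i j
    using that by (induction j rule: dec_induct) (auto intro: order_trans mono)
  have e_nonneg: "0 \<le> e j" if "j < n" for j
    using d_le[of 0 j] that unfolding e_def by simp
  have e_le_1: "e j \<le> 1" if "j < n" for j
    using d_le[of j "n - 1"] spread that n unfolding e_def by simp
  have sum_e: "(\<Sum>j<n. e j) = - int n * d 0"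
    using sum unfolding e_def by (simp add: sum_subtractf)
  have "(\<Sum>j<n. e j) = (\<Sum>j<m. e (Suc j))"
    unfolding n sum.lessThan_Suc_shift by (simp add: e_def)
  also have "\<dots> \<le> (\<Sum>j<m. 1)"
    by (intro sum_mono e_le_1) (simp add: n)
  also have "\<dots> < int n" by (simp add: n)
  finally have "int n * (- d 0) < int n * 1"
    using sum_e by simp
  moreover have "0 \<le> int n * (- d 0)"
    using sum_e sum_nonneg[of "{..<n}" e] e_nonneg by simp
  moreover have "0 < int n" using n by simp
  ultimately have "0 \<le> - d 0" "- d 0 < 1"
    by (simp_all only: zero_le_mult_iff mult_less_cancel_left_pos) auto
  then have "d 0 = 0" by simp
  then have "(\<Sum>j<n. e j) = 0" using sum_e by simp
  then have "e j = 0"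
    using e_nonneg \<open>j < n\<close> by (subst (asm) sum_nonneg_eq_0_iff) auto
  then show ?thesis using \<open>d 0 = 0\<close> unfolding e_def by simp
qed

lemma periodic_const_if_second_difference_nonneg:
  fixes C :: "int \<Rightarrow> int" and n :: nat
  assumes "0 < n"
    and periodic: "\<And>a b. a mod int n = b mod int n \<Longrightarrow> C a = C b"
    and second_diff: "\<And>r. 0 \<le> (if r mod int n = 0 then 1 else 0) + C (r + 1) + C (r - 1) - 2 * C r"
  shows "C r = C 0"
proof -
  define d where "d j = C (int j + 1) - C (int j)" for j
  have d_0: "d j = 0" if "j < n" for j
  proof (rule eq_0_if_mono_sum_eq_0_spread_le_1[OF _ _ _ that])
    show "d j \<le> d (Suc j)" if "Suc j < n" for j
      using second_diff[of "int (Suc j)"] that unfolding d_def by (simp add: algebra_simps)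
    have "C (int (n - 1) + 1) = C 0" "C (int (n - 1)) = C (- 1)"
      using \<open>0 < n\<close> by (auto intro!: periodic simp: mod_eq_dvd_iff of_nat_diff)
    then show "d (n - 1) \<le> d 0 + 1"
      using second_diff[of 0] unfolding d_def by simp
    have "(\<Sum>j<n. d j) = C (int n) - C 0"
      using sum_lessThan_telescope[of "\<lambda>j. C (int j)" n] unfolding d_def by (simp add: add.commute)
    then show "(\<Sum>j<n. d j) = 0"
      using periodic[of "int n" 0] by simp
  qed
  have "C (int j) = C 0" if "j \<le> n" for j
  using that proof (induction j)
    case (Suc j)
    then show ?case using d_0[of j] by (simp add: d_def add.commute)
  qed simp
  moreover have "r mod int n = int (nat (r mod int n))" "nat (r mod int n) \<le> n"
    using \<open>0 < n\<close> by (simp_all add: nat_le_iff less_imp_le)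
  ultimately have "C (r mod int n) = C 0" by metis
  then show ?thesis
    using \<open>0 < n\<close> periodic[of r "r mod int n"] by simp
qed

lemma residue_count_cong: "a mod int n = b mod int n \<Longrightarrow> residue_count n \<gamma> a = residue_count n \<gamma> b"
  unfolding residue_count_def by simp

lemma colorless_iff_residue_count_const:
  "colorless n \<gamma> \<longleftrightarrow> (\<forall>r. residue_count n \<gamma> r = residue_count n \<gamma> 0)"
proof
  assume "colorless n \<gamma>"
  then show "\<forall>r. residue_count n \<gamma> r = residue_count n \<gamma> 0"
    unfolding colorless_def residue_count_def by (intro allI arg_cong[where f = int]) blast
next
  assume const: "\<forall>r. residue_count n \<gamma> r = residue_count n \<gamma> 0"
  show "colorless n \<gamma>"
    unfolding colorless_def
  proof (intro allI)
    fix i j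
    from const have "residue_count n \<gamma> i = residue_count n \<gamma> j" by metis
    then show "card {(x, y) \<in> young \<gamma>. (x - y) mod int n = i mod int n}
        = card {(x, y) \<in> young \<gamma>. (x - y) mod int n = j mod int n}"
      unfolding residue_count_def by simp
  qed
qed

lemma vvec_colorless:
  assumes "is_partition \<gamma>" "colorless n \<gamma>"
  shows "vvec n \<gamma> k i = (if (i - k) mod int n = 0 then 1 else 0)"
proof -
  have "residue_count n \<gamma> r = residue_count n \<gamma> 0" for r
    using assms(2) colorless_iff_residue_count_const by blast
  from this[of "i - k + 1"] this[of "i - k - 1"] this[of "i - k"] show ?thesis
    unfolding vvec_eq_second_difference[OF assms(1)] by simp
qed

lemma colorless_if_vvec_nonneg:
  assumes "is_partition \<gamma>" "0 < n" and nonneg: "\<forall>i\<in>{0..<int n}. 0 \<le> vvec n \<gamma> k i"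
  shows "colorless n \<gamma>"
  unfolding colorless_iff_residue_count_const
proof (intro allI periodic_const_if_second_difference_nonneg[OF \<open>0 < n\<close> residue_count_cong])
  fix r
  define i where "i = (k + r) mod int n"
  have i_r: "(i - k + d) mod int n = (r + d) mod int n" for d
    unfolding i_def by (metis add_diff_cancel_left' diff_minus_eq_add mod_diff_left_eq)
  have "0 \<le> vvec n \<gamma> k i"
    using nonneg \<open>0 < n\<close> unfolding i_def by simp
  then show "0 \<le> (if r mod int n = 0 then 1 else 0) + residue_count n \<gamma> (r + 1)
      + residue_count n \<gamma> (r - 1) - 2 * residue_count n \<gamma> r"
    unfolding vvec_eq_second_difference[OF assms(1)]
    using i_r[of 0] residue_count_cong[OF i_r[of 1]] residue_count_cong[OF i_r[of "-1"]]
      residue_count_cong[OF i_r[of 0]]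
    by simp
qed

theorem mainTheorem10:
  fixes n :: nat and \<gamma> :: "nat list"
  assumes "n \<ge> 3" and "is_partition \<gamma>"
  shows "(colorless n \<gamma> \<longleftrightarrow>
           (\<exists>k\<in>{0..<int n}. \<forall>i\<in>{0..<int n}. vvec n \<gamma> k i \<ge> 0))
       \<and> (colorless n \<gamma> \<longrightarrow>
           (\<forall>k\<in>{0..<int n}. \<forall>i\<in>{0..<int n}. vvec n \<gamma> k i = (if i = k then 1 else 0)))"
proof -
  have n: "0 < n" using assms(1) by simp \<comment> \<open>the only use of \<open>n \<ge> 3\<close>\<close>
  have "(i - k) mod int n = 0 \<longleftrightarrow> i = k" if "k \<in> {0..<int n}" "i \<in> {0..<int n}" for i k
    using that by (simp add: mod_eq_0_iff_dvd mod_eq_dvd_iff[symmetric])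
  then have "colorless n \<gamma> \<longrightarrow>
      (\<forall>k\<in>{0..<int n}. \<forall>i\<in>{0..<int n}. vvec n \<gamma> k i = (if i = k then 1 else 0))"
    by (simp add: vvec_colorless[OF assms(2)])
  moreover have "0 \<in> {0..<int n}" using n by simp
  ultimately show ?thesis
    using colorless_if_vvec_nonneg[OF assms(2) n] by fastforce
qed

end
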